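(* Let $Q(z)$ be a complex cubic polynomial with three distinct roots $a_1,a_2,a_3$, and for $i\in\{1,2,3\}$ let $\mathcal C_{Q_i}(z)=\int\frac{dM_i(\xi)}{z-\xi}$ be the Cauchy transform of the measure $M_i$. Then for each $i$, outside the ellipse $E_i$ (i.e. on the complement of the closed elliptic domain $\tilde E_i$), $\mathcal C_{Q_i}$ satisfies the linear non-homogeneous differential equation $$Q(z)\mathcal C''_{Q_i}(z)+Q'(z)\mathcal C'_{Q_i}(z)+\frac{Q''(z)}{8}\mathcal C_{Q_i}(z)+\frac{Q'''(z)}{24}=0 .$$
   Context: For $i\in\{1,2,3\}$ let $j,k$ be the other two indices. $E_i$ is the ellipse with foci $a_j,a_k$ passing through $a_i$, and $\tilde E_i$ the closed elliptic domain it bounds. Write $Q(z)=c\big((z-a_i)^3+v_i(z-a_i)^2+w_i(z-a_i)\big)$ with $c\neq0$. For distinct $\alpha_1,\alpha_2\in\mathbb C$, the arcsine measure $\omega_{[\alpha_1,\alpha_2]}$ is the probability measure supported on the segment $[\alpha_1,\alpha_2]$ with density $\frac{1}{\pi\sqrt{|(t-\alpha_1)(t-\alpha_2)|}}$ with respect to arclength. With $\xi(\theta)=a_i-v_i\theta^2$ and $\psi(\theta)=-w_i(1-\theta^2)\theta^2$, $M_i=\int_0^1\omega_{[\xi(\theta)-2\sqrt{\psi(\theta)},\,\xi(\theta)+2\sqrt{\psi(\theta)}]}\,d\theta$. *)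

theory Defs
  imports "HOL-Analysis.Analysis" "HOL-Computational_Algebra.Polynomial"
begin

text \<open>Arcsine measure on the segment from al1 to al2: the probability measure with density
  1/(pi sqrt(|t-al1| |t-al2|)) w.r.t. arclength on the segment. Parametrizing
  t = al1 + s (al2 - al1), s in (0,1), arclength is |al2-al1| ds, and the density becomes
  1/(pi sqrt(s(1-s))) ds; we push this measure on (0,1) forward to the plane.\<close>
definition arcsine_measure :: "complex \<Rightarrow> complex \<Rightarrow> complex measure" where
  "arcsine_measure al1 al2 =
     distr (density lborel (\<lambda>s::real. ennreal (indicator {0<..<1} s / (pi * sqrt (s * (1 - s))))))
           borel (\<lambda>s. al1 + of_real s * (al2 - al1))"

definition mixture_measure :: "(real \<Rightarrow> complex measure) \<Rightarrow> complex measure" where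
  "mixture_measure om =
     measure_of UNIV (sets borel)
       (\<lambda>A. \<integral>\<^sup>+ \<theta>. indicator {0..1} \<theta> * emeasure (om \<theta>) A \<partial>lborel)"

definition M_meas :: "complex \<Rightarrow> complex \<Rightarrow> complex \<Rightarrow> complex measure" where
  "M_meas a v w =
     mixture_measure (\<lambda>\<theta>.
        let xi = a - v * (of_real \<theta>)\<^sup>2;
            psi = - w * (1 - (of_real \<theta>)\<^sup>2) * (of_real \<theta>)\<^sup>2
        in arcsine_measure (xi - 2 * csqrt psi) (xi + 2 * csqrt psi))"

definition cauchy_transform :: "complex measure \<Rightarrow> complex \<Rightarrow> complex" where
  "cauchy_transform M z = (\<integral> \<xi>. 1 / (z - \<xi>) \<partial>M)"

end

theory Submission
  imports Defs
begin

text \<open>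
  Write \<open>p(\<theta>, t) = \<xi>(\<theta>) - 2 \<surd>\<psi>(\<theta>) cos t\<close>. The arcsine measure on the segment of parameter
  \<open>\<theta>\<close> is the image of \<open>dt/\<pi>\<close> on \<open>[0, \<pi>]\<close> under \<open>t \<mapsto> p(\<theta>, t)\<close>, so the Cauchy transform of
  \<open>M\<^sub>i\<close> is \<open>J\<^sub>1/\<pi>\<close>, where \<open>J\<^sub>n(z) = \<integral>\<^sub>0\<^sup>1 I\<^sub>n(z, \<theta>) d\<theta>\<close> and \<open>I\<^sub>n(z, \<theta>) = \<integral>\<^sub>0\<^sup>\<pi> (z - p(\<theta>, t))\<^sup>-\<^sup>n dt\<close>.
  Every \<open>p(\<theta>, t)\<close> is a convex combination of two points of the ellipse \<open>E\<^sub>i\<close>, so off the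
  closed elliptic domain these integrals are holomorphic with \<open>J\<^sub>n' = -n J\<^sub>n\<^sub>+\<^sub>1\<close>, and the
  equation becomes a linear relation between \<open>J\<^sub>1, J\<^sub>2, J\<^sub>3\<close>.

  For fixed \<open>\<theta>\<close> one has \<open>z - p = A + B cos t\<close>, and the elementary integrals
  \<open>K\<^sub>n = \<integral>\<^sub>0\<^sup>\<pi> (A + B cos t)\<^sup>-\<^sup>n dt\<close> satisfy \<open>A K\<^sub>1 = (A\<^sup>2 - B\<^sup>2) K\<^sub>2\<close>, a similar formula for \<open>K\<^sub>3\<close>
  and \<open>\<partial>\<^sub>\<theta> K\<^sub>1 = -P'/(2P) K\<^sub>1\<close> with \<open>P = A\<^sup>2 - B\<^sup>2\<close>, a polynomial in \<open>\<theta>\<close>. Hence the integrand of the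
  relation is the \<open>\<theta>\<close>-derivative of \<open>\<Phi>(\<theta>) I\<^sub>1(z, \<theta>)\<close> for an explicit rational \<open>\<Phi>\<close>, and only the
  boundary term at \<open>\<theta> = 1\<close>, where the segment degenerates to a point, survives: it equals
  \<open>-\<pi>/4\<close> and cancels the constant term \<open>Q'''/24\<close>.
\<close>

lemma has_field_derivative_inverse_power:
  fixes x c :: "'a::real_normed_field"
  assumes "x + c \<noteq> 0"
  shows "((\<lambda>x. (1 / (x + c)) ^ n) has_field_derivative - of_nat n * (1 / (x + c)) ^ Suc n) (at x within S)"
proof -
  have "((\<lambda>x. (1 / (x + c)) ^ n) has_field_derivative
        of_nat n * (1 / (x + c)) ^ (n - 1) * (- 1 / (x + c)\<^sup>2)) (at x within S)"
    using assms by (auto intro!: derivative_eq_intros simp: power2_eq_square)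
  moreover have "of_nat n * (1 / (x + c)) ^ (n - 1) * (- 1 / (x + c)\<^sup>2)
      = of_nat n * (1 / (x + c)) ^ (n - 1) * - (1 / (x + c))\<^sup>2"
    by (simp add: power_divide)
  also have "\<dots> = - of_nat n * (1 / (x + c)) ^ Suc n"
    by (cases n) (simp, simp only: power2_eq_square power_Suc diff_Suc_1 mult_minus_right mult_minus_left mult_ac)
  ultimately show ?thesis by metis
qed

lemma has_vector_derivative_inverse[derivative_intros]:
  fixes g :: "real \<Rightarrow> 'a::real_normed_field"
  assumes "(g has_vector_derivative g') (at x within S)" "g x \<noteq> 0"
  shows "((\<lambda>x. inverse (g x)) has_vector_derivative - (g' * inverse (g x ^ 2))) (at x within S)"
proof -
  have "(inverse has_field_derivative - (inverse (g x) ^ 2)) (at (g x) within g ` S)"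
    using assms(2) by (auto intro!: derivative_eq_intros simp: power2_eq_square)
  from field_vector_diff_chain_within[OF assms(1) this] show ?thesis
    by (simp add: o_def power_inverse)
qed

lemma integral_linear_combination:
  fixes f g h :: "real \<Rightarrow> complex"
  assumes "f integrable_on S" "g integrable_on S" "h integrable_on S"
  shows "integral S (\<lambda>x. a * f x - b * g x + c * h x) = a * integral S f - b * integral S g + c * integral S h"
  using assms by (simp add: integral_add integral_diff integrable_diff integrable_on_mult_right)

section \<open>Integrals of powers of \<open>1 / (A + B cos t)\<close> over \<open>[0, \<pi>]\<close>\<close>

definition cos_kernel_integral :: "nat \<Rightarrow> complex \<Rightarrow> complex \<Rightarrow> complex" where
  "cos_kernel_integral n A B = integral {0..pi} (\<lambda>t. (1 / (A + B * of_real (cos t))) ^ n)"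

lemma open_cos_kernel_regular:
  fixes B :: complex
  shows "open {A. \<forall>t\<in>{0..pi}. A + B * of_real (cos t) \<noteq> 0}"
proof -
  have "{A. \<forall>t\<in>{0..pi}. A + B * of_real (cos t) \<noteq> 0} = - (\<lambda>t. - B * of_real (cos t)) ` {0..pi}"
    by (auto simp: image_iff eq_neg_iff_add_eq_0)
  moreover have "compact ((\<lambda>t. - B * of_real (cos t)) ` {0..pi})"
    by (intro compact_continuous_image) (auto intro!: continuous_intros)
  ultimately show ?thesis by (simp add: open_Compl compact_imp_closed)
qed

lemma cos_kernel_regular_imp_discriminant_nonzero:
  fixes A B :: complex
  assumes "\<forall>t\<in>{0..pi}. A + B * of_real (cos t) \<noteq> 0"
  shows "A\<^sup>2 - B\<^sup>2 \<noteq> 0"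
proof -
  have "A + B \<noteq> 0" "A - B \<noteq> 0" using assms[rule_format, of 0] assms[rule_format, of pi] by auto
  then have "(A + B) * (A - B) \<noteq> 0" by (metis mult_eq_0_iff)
  thus ?thesis by (simp add: power2_eq_square algebra_simps)
qed

lemma continuous_on_cos_kernel_integral:
  "continuous_on {(A, B). \<forall>t\<in>{0..pi}. A + B * of_real (cos t) \<noteq> 0}
     (\<lambda>(A, B). cos_kernel_integral n A B)"
proof -
  have "continuous_on ({(A, B). \<forall>t\<in>{0..pi}. A + B * of_real (cos t) \<noteq> 0} \<times> cbox 0 pi)
          (\<lambda>(p, t). (1 / (fst p + snd p * of_real (cos t))) ^ n :: complex)"
    unfolding case_prod_beta by (intro continuous_intros) auto
  from integral_continuous_on_param[OF this] show ?thesis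
    by (simp add: cos_kernel_integral_def case_prod_beta)
qed

lemma has_field_derivative_cos_kernel_integral:
  assumes "\<forall>t\<in>{0..pi}. A + B * of_real (cos t) \<noteq> 0"
  shows "((\<lambda>A. cos_kernel_integral n A B) has_field_derivative
           - of_nat n * cos_kernel_integral (Suc n) A B) (at A)"
proof -
  obtain e where e: "e > 0" "ball A e \<subseteq> {A. \<forall>t\<in>{0..pi}. A + B * of_real (cos t) \<noteq> 0}"
    using openE[OF open_cos_kernel_regular[of B], of A] assms by auto
  then have reg: "x + B * of_real (cos t) \<noteq> 0" if "x \<in> ball A e" "t \<in> cbox 0 pi" for x t
    using that by auto
  have "((\<lambda>A. integral (cbox 0 pi) (\<lambda>t. (1 / (A + B * of_real (cos t))) ^ n)) has_field_derivative
        integral (cbox 0 pi) (\<lambda>t. - of_nat n * (1 / (A + B * of_real (cos t))) ^ Suc n))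
        (at A within ball A e)"
  proof (rule leibniz_rule_field_derivative)
    fix x t assume "x \<in> ball A e" "t \<in> cbox 0 pi"
    then show "((\<lambda>x. (1 / (x + B * of_real (cos t))) ^ n) has_field_derivative
                - of_nat n * (1 / (x + B * of_real (cos t))) ^ Suc n) (at x within ball A e)"
      by (intro has_field_derivative_inverse_power reg)
  next
    fix x assume "x \<in> ball A e"
    then show "(\<lambda>t. (1 / (x + B * of_real (cos t))) ^ n) integrable_on cbox 0 pi"
      by (intro integrable_continuous continuous_intros) (auto simp: reg)
  next
    show "continuous_on (ball A e \<times> cbox 0 pi)
            (\<lambda>(x, t). - of_nat n * (1 / (x + B * of_real (cos t))) ^ Suc n)"
      unfolding case_prod_beta by (intro continuous_intros) (auto simp: reg)
  qed (use \<open>e > 0\<close> in auto)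
  then show ?thesis
    unfolding cos_kernel_integral_def integral_mult_right cbox_interval
      at_within_open[OF centre_in_ball[THEN iffD2, OF \<open>e > 0\<close>] open_ball] .
qed

lemma continuous_on_cos_kernel_power:
  fixes A B :: complex
  assumes "\<forall>t\<in>{0..pi}. A + B * of_real (cos t) \<noteq> 0"
  shows "continuous_on {0..pi} (\<lambda>t. (1 / (A + B * of_real (cos t))) ^ n)"
  using assms by (intro continuous_intros) auto

lemma cos_kernel_integral_recurrence:
  assumes regular: "\<forall>t\<in>{0..pi}. A + B * of_real (cos t) \<noteq> 0"
  shows "A * cos_kernel_integral 1 A B = (A\<^sup>2 - B\<^sup>2) * cos_kernel_integral 2 A B"
proof -
  define D where "D t = A + B * of_real (cos t)" for t
  have D_nz: "D t \<noteq> 0" if "t \<in> {0..pi}" for t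
    using regular that by (simp add: D_def)
  \<comment> \<open>\<open>G' = A/D - (A\<^sup>2 - B\<^sup>2)/D\<^sup>2\<close>, and \<open>G\<close> vanishes at both ends\<close>
  define G where "G t = B * of_real (sin t) * inverse (D t)" for t
  have "(G has_vector_derivative A * (1 / D t) - (A\<^sup>2 - B\<^sup>2) * (1 / D t)\<^sup>2) (at t within {0..pi})"
    if t: "t \<in> {0..pi}" for t
  proof -
    have dD: "(D has_vector_derivative B * - of_real (sin t)) (at t within {0..pi})"
      unfolding D_def by (auto intro!: derivative_eq_intros)
    have "((\<lambda>t. B * of_real (sin t)) has_vector_derivative B * of_real (cos t)) (at t within {0..pi})"
      by (auto intro!: derivative_eq_intros)
    from has_vector_derivative_mult[OF this has_vector_derivative_inverse[OF dD D_nz[OF t]]]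
    have "(G has_vector_derivative (B * of_real (cos t) * D t + B\<^sup>2 * (of_real (sin t))\<^sup>2) / (D t)\<^sup>2)
            (at t within {0..pi})"
      unfolding G_def[abs_def] using D_nz[OF t] by (simp add: power2_eq_square field_simps)
    moreover have "(of_real (sin t))\<^sup>2 = 1 - (of_real (cos t) :: complex)\<^sup>2"
      by (metis of_real_1 of_real_diff of_real_power sin_squared_eq)
    then have "B * of_real (cos t) * D t + B\<^sup>2 * (of_real (sin t))\<^sup>2
        = (D t - A) * D t + B\<^sup>2 - (D t - A)\<^sup>2"
      by (simp add: D_def power_mult_distrib right_diff_distrib)
    then have "(B * of_real (cos t) * D t + B\<^sup>2 * (of_real (sin t))\<^sup>2) / (D t)\<^sup>2
        = A * (1 / D t) - (A\<^sup>2 - B\<^sup>2) * (1 / D t)\<^sup>2"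
      using D_nz[OF t] by (simp add: field_simps power2_eq_square)
    ultimately show ?thesis by simp
  qed
  then have "((\<lambda>t. A * (1 / D t) - (A\<^sup>2 - B\<^sup>2) * (1 / D t)\<^sup>2) has_integral G pi - G 0) {0..pi}"
    by (intro fundamental_theorem_of_calculus) auto
  moreover have "G pi - G 0 = 0" by (simp add: G_def)
  ultimately have "integral {0..pi} (\<lambda>t. A * (1 / D t) ^ 1 - (A\<^sup>2 - B\<^sup>2) * (1 / D t)\<^sup>2) = 0"
    by (simp add: integral_unique)
  moreover have "(\<lambda>t. (1 / D t) ^ n) integrable_on {0..pi}" for n
    unfolding D_def by (intro integrable_continuous_real continuous_on_cos_kernel_power regular)
  ultimately show ?thesis
    unfolding cos_kernel_integral_def D_def[symmetric]
    by (simp only: integral_diff integrable_on_mult_right integral_mult_right right_minus_eq)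
qed

lemma integrable_cos_kernel_power:
  fixes A B :: complex
  assumes "\<forall>t\<in>{0..pi}. A + B * of_real (cos t) \<noteq> 0"
  shows "(\<lambda>t. (1 / (A + B * of_real (cos t))) ^ n) integrable_on {0..pi}"
    and "(\<lambda>t. of_real (cos t) * (1 / (A + B * of_real (cos t))) ^ n) integrable_on {0..pi}"
  using assms by (intro integrable_continuous_real continuous_intros; auto)+

lemma cos_kernel_integral_cos_moment:
  assumes regular: "\<forall>t\<in>{0..pi}. A + B * of_real (cos t) \<noteq> 0"
  shows "B * integral {0..pi} (\<lambda>t. of_real (cos t) * (1 / (A + B * of_real (cos t)))\<^sup>2)
       = cos_kernel_integral 1 A B - A * cos_kernel_integral 2 A B"
proof -
  have "B * (of_real (cos t) * (1 / (A + B * of_real (cos t)))\<^sup>2)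
      = (1 / (A + B * of_real (cos t))) ^ 1 - A * (1 / (A + B * of_real (cos t)))\<^sup>2"
    if "t \<in> {0..pi}" for t
  proof -
    define D where "D = A + B * of_real (cos t)"
    have "D \<noteq> 0" using regular that by (simp add: D_def)
    have "B * (of_real (cos t) * (1 / D)\<^sup>2) = (D - A) * (1 / D)\<^sup>2"
      by (simp add: D_def algebra_simps)
    also have "\<dots> = (1 / D) ^ 1 - A * (1 / D)\<^sup>2"
      using \<open>D \<noteq> 0\<close> by (simp add: field_simps power2_eq_square)
    finally show ?thesis by (simp only: D_def)
  qed
  then have "integral {0..pi} (\<lambda>t. B * (of_real (cos t) * (1 / (A + B * of_real (cos t)))\<^sup>2))
      = integral {0..pi} (\<lambda>t. (1 / (A + B * of_real (cos t))) ^ 1 - A * (1 / (A + B * of_real (cos t)))\<^sup>2)"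
    by (intro integral_cong)
  then show ?thesis
    unfolding cos_kernel_integral_def using integrable_cos_kernel_power[OF regular]
    by (simp only: integral_mult_right integral_diff integrable_on_mult_right)
qed

text \<open>Obtained by differentiating the recurrence with respect to \<open>A\<close>.\<close>

lemma cos_kernel_integral_3:
  assumes regular: "\<forall>t\<in>{0..pi}. A + B * of_real (cos t) \<noteq> 0"
  shows "2 * cos_kernel_integral 3 A B
       = (3 * A\<^sup>2 / (A\<^sup>2 - B\<^sup>2)\<^sup>2 - 1 / (A\<^sup>2 - B\<^sup>2)) * cos_kernel_integral 1 A B"
proof -
  let ?K = "\<lambda>n A. cos_kernel_integral n A B"
  define P where "P = A\<^sup>2 - B\<^sup>2"
  have P: "P \<noteq> 0"
    unfolding P_def by (rule cos_kernel_regular_imp_discriminant_nonzero[OF regular])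
  have "((\<lambda>A. A * ?K 1 A - (A\<^sup>2 - B\<^sup>2) * ?K 2 A) has_field_derivative
          1 * ?K 1 A + A * (- 1 * ?K 2 A) - (2 * A * ?K 2 A + (A\<^sup>2 - B\<^sup>2) * (- 2 * ?K 3 A))) (at A)"
    using has_field_derivative_cos_kernel_integral[OF regular]
    by (auto intro!: derivative_eq_intros simp: numeral_2_eq_2 numeral_3_eq_3)
  moreover have "((\<lambda>A. A * ?K 1 A - (A\<^sup>2 - B\<^sup>2) * ?K 2 A) has_field_derivative 0) (at A)"
    by (rule has_field_derivative_transform_within_open[OF DERIV_const open_cos_kernel_regular])
       (use regular cos_kernel_integral_recurrence in auto)
  ultimately have "1 * ?K 1 A + A * (- 1 * ?K 2 A) - (2 * A * ?K 2 A + P * (- 2 * ?K 3 A)) = 0"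
    unfolding P_def by (rule DERIV_unique)
  then have "2 * ?K 3 A = (3 * A * ?K 2 A - ?K 1 A) / P"
    using P by (simp add: eq_divide_eq algebra_simps)
  also have "?K 2 A = A * ?K 1 A / P"
    using cos_kernel_integral_recurrence[OF regular] P by (simp add: P_def field_simps)
  finally show ?thesis
    unfolding P_def[symmetric] using P by (simp add: field_simps power2_eq_square)
qed

lemma cos_kernel_integral_1_degenerate: "cos_kernel_integral 1 A 0 = of_real pi / A"
  by (simp add: cos_kernel_integral_def scaleR_conv_of_real)

lemma has_vector_derivative_cos_kernel_integral:
  fixes A B dA dB :: "real \<Rightarrow> complex"
  assumes S: "open S" "convex S" "\<theta> \<in> S"
    and dA: "\<And>x. x \<in> S \<Longrightarrow> (A has_vector_derivative dA x) (at x)" and "continuous_on S dA"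
    and dB: "\<And>x. x \<in> S \<Longrightarrow> (B has_vector_derivative dB x) (at x)" and "continuous_on S dB"
    and regular: "\<And>x t. x \<in> S \<Longrightarrow> t \<in> {0..pi} \<Longrightarrow> A x + B x * of_real (cos t) \<noteq> 0"
  shows "((\<lambda>x. cos_kernel_integral 1 (A x) (B x)) has_vector_derivative
           - (dA \<theta> * cos_kernel_integral 2 (A \<theta>) (B \<theta>)
              + dB \<theta> * integral {0..pi} (\<lambda>t. of_real (cos t) * (1 / (A \<theta> + B \<theta> * of_real (cos t)))\<^sup>2)))
         (at \<theta>)"
proof -
  let ?f = "\<lambda>x t. - ((dA x + dB x * of_real (cos t)) * (1 / (A x + B x * of_real (cos t)))\<^sup>2)"
  have "continuous_on S A" "continuous_on S B"
    using dA dB by (auto intro!: continuous_at_imp_continuous_on has_vector_derivative_continuous)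
  then have "((\<lambda>x. integral (cbox 0 pi) (\<lambda>t. (1 / (A x + B x * of_real (cos t))) ^ 1))
          has_vector_derivative integral (cbox 0 pi) (?f \<theta>)) (at \<theta> within S)"
  proof (intro leibniz_rule_vector_derivative)
    fix x t assume x: "x \<in> S" and "t \<in> cbox 0 pi"
    then have "A x + B x * of_real (cos t) \<noteq> 0" by (intro regular) auto
    moreover have "(A has_vector_derivative dA x) (at x within S)" "(B has_vector_derivative dB x) (at x within S)"
      using dA[OF x] dB[OF x] by (auto intro: has_vector_derivative_at_within)
    ultimately show "((\<lambda>x. (1 / (A x + B x * of_real (cos t))) ^ 1) has_vector_derivative ?f x t) (at x within S)"
      by (auto intro!: derivative_eq_intros simp: divide_inverse power2_eq_square inverse_mult_distrib)
  next
    fix x assume "x \<in> S"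
    then show "(\<lambda>t. (1 / (A x + B x * of_real (cos t))) ^ 1) integrable_on cbox 0 pi"
      using regular integrable_cos_kernel_power(1)[of "A x" "B x" 1] by simp
  next
    have fst: "continuous_on (S \<times> cbox 0 pi) (\<lambda>p. f (fst p))" if "continuous_on S f" for f :: "real \<Rightarrow> complex"
      by (rule continuous_on_compose2[OF that continuous_on_fst[OF continuous_on_id]]) auto
    show "continuous_on (S \<times> cbox 0 pi) (\<lambda>(x, t). ?f x t)"
      unfolding case_prod_beta using regular
      by (intro continuous_intros fst[OF \<open>continuous_on S A\<close>] fst[OF \<open>continuous_on S B\<close>]
          fst[OF \<open>continuous_on S dA\<close>] fst[OF \<open>continuous_on S dB\<close>]) auto
  qed (use S in auto)
  moreover have "integral {0..pi} (?f \<theta>)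
      = - (dA \<theta> * cos_kernel_integral 2 (A \<theta>) (B \<theta>)
           + dB \<theta> * integral {0..pi} (\<lambda>t. of_real (cos t) * (1 / (A \<theta> + B \<theta> * of_real (cos t)))\<^sup>2))"
  proof -
    define k where "k t = (1 / (A \<theta> + B \<theta> * of_real (cos t)))\<^sup>2" for t
    have "(\<lambda>t. k t) integrable_on {0..pi}" "(\<lambda>t. of_real (cos t) * k t) integrable_on {0..pi}"
      unfolding k_def using integrable_cos_kernel_power regular[OF S(3)] by auto
    moreover have "?f \<theta> = (\<lambda>t. - (dA \<theta> * k t) - dB \<theta> * (of_real (cos t) * k t))"
      by (simp add: k_def fun_eq_iff algebra_simps)
    ultimately show ?thesis
      by (simp add: integral_diff integrable_neg integrable_on_mult_right cos_kernel_integral_def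
          k_def[symmetric])
  qed
  ultimately show ?thesis
    by (simp add: cos_kernel_integral_def at_within_open[OF S(3,1)])
qed

text \<open>Formally \<open>K\<^sub>1 = \<pi> / \<surd>(A\<^sup>2 - B\<^sup>2)\<close>; this is its logarithmic derivative along a curve,
  obtained without choosing a branch of the square root.\<close>

lemma has_vector_derivative_cos_kernel_integral_log:
  fixes A B dA dB :: "real \<Rightarrow> complex"
  assumes S: "open S" "convex S" "\<theta> \<in> S"
    and dA: "\<And>x. x \<in> S \<Longrightarrow> (A has_vector_derivative dA x) (at x)" and "continuous_on S dA"
    and dB: "\<And>x. x \<in> S \<Longrightarrow> (B has_vector_derivative dB x) (at x)" and "continuous_on S dB"
    and regular: "\<And>x t. x \<in> S \<Longrightarrow> t \<in> {0..pi} \<Longrightarrow> A x + B x * of_real (cos t) \<noteq> 0"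
    and "B \<theta> \<noteq> 0"
  shows "((\<lambda>x. cos_kernel_integral 1 (A x) (B x)) has_vector_derivative
           (B \<theta> * dB \<theta> - A \<theta> * dA \<theta>) / ((A \<theta>)\<^sup>2 - (B \<theta>)\<^sup>2)
           * cos_kernel_integral 1 (A \<theta>) (B \<theta>)) (at \<theta>)"
proof -
  have reg: "\<forall>t\<in>{0..pi}. A \<theta> + B \<theta> * of_real (cos t) \<noteq> 0"
    using regular S(3) by blast
  define P where "P = (A \<theta>)\<^sup>2 - (B \<theta>)\<^sup>2"
  define K where "K n = cos_kernel_integral n (A \<theta>) (B \<theta>)" for n
  define C where "C = integral {0..pi} (\<lambda>t. of_real (cos t) * (1 / (A \<theta> + B \<theta> * of_real (cos t)))\<^sup>2)"
  have P: "P \<noteq> 0"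
    unfolding P_def by (rule cos_kernel_regular_imp_discriminant_nonzero[OF reg])
  have K2: "K 2 = A \<theta> * K 1 / P"
    using cos_kernel_integral_recurrence[OF reg] P by (simp add: K_def P_def field_simps)
  have "B \<theta> * C = K 1 - A \<theta> * K 2"
    unfolding C_def K_def by (rule cos_kernel_integral_cos_moment[OF reg])
  then have "B \<theta> * (C * P + B \<theta> * K 1) = 0"
    using P unfolding K2 by (simp add: P_def field_simps power2_eq_square)
  then have "C * P + B \<theta> * K 1 = 0"
    using \<open>B \<theta> \<noteq> 0\<close> by simp
  then have C: "C = - B \<theta> * K 1 / P"
    using P by (simp add: field_simps eq_neg_iff_add_eq_0)
  have "- (dA \<theta> * K 2 + dB \<theta> * C) = (B \<theta> * dB \<theta> - A \<theta> * dA \<theta>) / P * K 1"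
    using P unfolding K2 C by (simp add: field_simps)
  with has_vector_derivative_cos_kernel_integral[OF assms(1-8)] show ?thesis
    by (simp add: K_def C_def P_def)
qed

section \<open>The support of \<open>M\<^sub>i\<close> lies in the closed elliptic domain\<close>

definition arc_scale :: "real \<Rightarrow> real" where
  "arc_scale \<theta> = 2 * \<theta> * sqrt (1 - \<theta>\<^sup>2)"

text \<open>\<open>mixture_point a v w \<theta> t = \<xi>(\<theta>) - 2 \<surd>\<psi>(\<theta>) cos t\<close> (see \<open>two_csqrt_psi_eq_arc_scale\<close>); for fixed
  \<open>\<theta>\<close> the arcsine measure is the image of \<open>dt/\<pi>\<close> on \<open>[0, \<pi>]\<close> under this map.\<close>

definition mixture_point :: "complex \<Rightarrow> complex \<Rightarrow> complex \<Rightarrow> real \<Rightarrow> real \<Rightarrow> complex" where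
  "mixture_point a v w \<theta> t = a - v * (of_real \<theta>)\<^sup>2 - of_real (arc_scale \<theta> * cos t) * csqrt (- w)"

lemma continuous_on_arc_scale[continuous_intros]:
  "continuous_on S f \<Longrightarrow> continuous_on S (\<lambda>x. arc_scale (f x))"
  unfolding arc_scale_def by (intro continuous_intros)

lemma continuous_on_mixture_point[continuous_intros]:
  fixes f g :: "'a::t2_space \<Rightarrow> real"
  shows "continuous_on S f \<Longrightarrow> continuous_on S g \<Longrightarrow> continuous_on S (\<lambda>x. mixture_point a v w (f x) (g x))"
  unfolding mixture_point_def by (intro continuous_intros)

text \<open>With \<open>q\<^sub>1, q\<^sub>2\<close> square roots of \<open>X + iY\<close>, \<open>X - iY\<close> rotated by \<open>(c + is)\<^sup>\<mp>\<^sup>1\<^sup>/\<^sup>2\<close>, the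
  two distances are \<open>|q\<^sub>1 \<plusminus> q\<^sub>2|\<^sup>2/2\<close>, and the parallelogram law gives their sum.\<close>

lemma ellipse_focal_sum:
  fixes X Y f :: complex and c s :: real
  assumes cs: "c\<^sup>2 + s\<^sup>2 = 1" and f: "f\<^sup>2 = X\<^sup>2 + Y\<^sup>2"
  shows "cmod (X * c + Y * s - f) + cmod (X * c + Y * s + f) = cmod (X + \<i> * Y) + cmod (X - \<i> * Y)"
proof -
  define \<alpha> where "\<alpha> = X + \<i> * Y"
  define \<gamma> where "\<gamma> = X - \<i> * Y"
  define \<omega> where "\<omega> = csqrt (Complex c s)"
  have \<omega>2: "\<omega>\<^sup>2 = Complex c s" by (simp add: \<omega>_def)
  have "cmod (Complex c s) = 1" using cs by (simp add: cmod_def)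
  then have "cmod \<omega> ^ 2 = 1" by (metis norm_power \<omega>2)
  then have \<omega>_unit: "\<omega> * cnj \<omega> = 1" "cmod \<omega> = 1"
    by (metis complex_norm_square mult.commute of_real_1, smt (verit) norm_ge_zero power2_eq_1_iff)
  have \<omega>2': "(cnj \<omega>)\<^sup>2 = Complex c (- s)" by (metis complex_cnj_power \<omega>2 complex_cnj)
  define q1 where "q1 = csqrt \<alpha> * cnj \<omega>"
  define q2 where "q2 = csqrt \<gamma> * \<omega>"
  have mid: "X * c + Y * s = (\<alpha> * (cnj \<omega>)\<^sup>2 + \<gamma> * \<omega>\<^sup>2) / 2"
    unfolding \<omega>2 \<omega>2' \<alpha>_def \<gamma>_def by (simp add: complex_eq_iff algebra_simps)
  have "(q1 + q2)\<^sup>2 / 2 = ((csqrt \<alpha>)\<^sup>2 * (cnj \<omega>)\<^sup>2 + (csqrt \<gamma>)\<^sup>2 * \<omega>\<^sup>2) / 2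
                            + csqrt \<alpha> * csqrt \<gamma> * (\<omega> * cnj \<omega>)"
       "(q1 - q2)\<^sup>2 / 2 = ((csqrt \<alpha>)\<^sup>2 * (cnj \<omega>)\<^sup>2 + (csqrt \<gamma>)\<^sup>2 * \<omega>\<^sup>2) / 2
                            - csqrt \<alpha> * csqrt \<gamma> * (\<omega> * cnj \<omega>)"
    unfolding q1_def q2_def by (simp_all add: power2_eq_square field_simps)
  then have sq_plus: "(q1 + q2)\<^sup>2 / 2 = X * c + Y * s + csqrt \<alpha> * csqrt \<gamma>"
    and sq_minus: "(q1 - q2)\<^sup>2 / 2 = X * c + Y * s - csqrt \<alpha> * csqrt \<gamma>"
    unfolding mid using \<omega>_unit(1) by simp_all
  have "cmod q1 ^ 2 = cmod \<alpha>" "cmod q2 ^ 2 = cmod \<gamma>"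
    using \<omega>_unit(2) by (simp_all add: q1_def q2_def norm_mult power_mult_distrib flip: norm_power)
  then have sum: "cmod ((q1 + q2)\<^sup>2 / 2) + cmod ((q1 - q2)\<^sup>2 / 2) = cmod \<alpha> + cmod \<gamma>"
    unfolding norm_divide norm_power cmod_power2 by (simp add: power2_eq_square field_simps cmod_power2)
  have "(csqrt \<alpha> * csqrt \<gamma>)\<^sup>2 = \<alpha> * \<gamma>" by (simp add: power_mult_distrib)
  also have "\<dots> = f\<^sup>2"
    using f by (simp add: \<alpha>_def \<gamma>_def algebra_simps power2_eq_square)
  finally consider "csqrt \<alpha> * csqrt \<gamma> = f" | "csqrt \<alpha> * csqrt \<gamma> = - f"
    by (auto simp: power2_eq_iff)
  then show ?thesis
  proof cases
    case 1
    then have e: "X * c + Y * s - f = (q1 - q2)\<^sup>2 / 2" "X * c + Y * s + f = (q1 + q2)\<^sup>2 / 2"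
      using sq_plus sq_minus by simp_all
    show ?thesis unfolding e using sum by (simp add: \<alpha>_def \<gamma>_def add.commute)
  next
    case 2
    then have e: "X * c + Y * s - f = (q1 + q2)\<^sup>2 / 2" "X * c + Y * s + f = (q1 - q2)\<^sup>2 / 2"
      using sq_plus sq_minus by simp_all
    show ?thesis unfolding e using sum by (simp add: \<alpha>_def \<gamma>_def)
  qed
qed

lemma arc_scale_squared: "\<theta>\<^sup>2 \<le> 1 \<Longrightarrow> (arc_scale \<theta>)\<^sup>2 = 4 * \<theta>\<^sup>2 * (1 - \<theta>\<^sup>2)"
  unfolding arc_scale_def by (simp add: power_mult_distrib)

lemma sum_dist_convex_combination_le:
  fixes p q f g :: "'a::real_normed_vector"
  assumes "0 \<le> l" "l \<le> 1"
  shows "norm (l *\<^sub>R p + (1 - l) *\<^sub>R q - f) + norm (l *\<^sub>R p + (1 - l) *\<^sub>R q - g)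
         \<le> l * (norm (p - f) + norm (p - g)) + (1 - l) * (norm (q - f) + norm (q - g))"
proof -
  have "norm (l *\<^sub>R p + (1 - l) *\<^sub>R q - h) \<le> l * norm (p - h) + (1 - l) * norm (q - h)" for h
  proof -
    have "l *\<^sub>R p + (1 - l) *\<^sub>R q - h = l *\<^sub>R (p - h) + (1 - l) *\<^sub>R (q - h)"
      by (simp add: algebra_simps)
    then show ?thesis
      using assms norm_triangle_ineq[of "l *\<^sub>R (p - h)" "(1 - l) *\<^sub>R (q - h)"] by simp
  qed
  from add_mono[OF this this] show ?thesis by (simp add: algebra_simps)
qed

text \<open>The point is a convex combination of the endpoints \<open>t = 0, \<pi>\<close>, which lie on the ellipse
  with foci \<open>a + b\<close>, \<open>a + d\<close> through \<open>a\<close>.\<close>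

lemma mixture_point_in_ellipse:
  assumes v: "v = - (b + d)" and w: "w = b * d" and \<theta>: "0 \<le> \<theta>" "\<theta> \<le> 1"
  shows "cmod (mixture_point a v w \<theta> t - (a + b)) + cmod (mixture_point a v w \<theta> t - (a + d))
         \<le> cmod b + cmod d"
proof -
  define X where "X = v / 2"
  define Y where "Y = - csqrt (- w)"
  define f where "f = (b - d) / 2"
  define c where "c = 1 - 2 * \<theta>\<^sup>2"
  define l where "l = (1 + cos t) / 2"
  define ep where "ep = X * c + Y * arc_scale \<theta>"
  define em where "em = X * c + Y * (- arc_scale \<theta>)"
  have "Y * Y = - w" using power2_csqrt[of "- w"] by (simp add: Y_def power2_eq_square)
  then have f: "f\<^sup>2 = X\<^sup>2 + Y\<^sup>2"
    unfolding f_def X_def by (simp add: v w power2_eq_square field_simps)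
  have \<theta>2: "\<theta>\<^sup>2 \<le> 1" using \<theta> by (simp add: power_le_one)
  have cs: "c\<^sup>2 + (arc_scale \<theta>)\<^sup>2 = 1" "c\<^sup>2 + (- arc_scale \<theta>)\<^sup>2 = 1"
    unfolding c_def power2_minus arc_scale_squared[OF \<theta>2] by (simp_all add: power2_eq_square algebra_simps)
  have "cmod (X + \<i> * Y) + cmod (X - \<i> * Y) = cmod (X - f) + cmod (X + f)"
    using ellipse_focal_sum[of 1 0 f X Y] f by simp
  also have "\<dots> = cmod b + cmod d"
    unfolding X_def f_def v by (simp add: field_simps norm_minus_commute)
  finally have on_ellipse: "cmod (ep - f) + cmod (ep - - f) = cmod b + cmod d"
    "cmod (em - f) + cmod (em - - f) = cmod b + cmod d"
    unfolding ep_def em_def using ellipse_focal_sum[OF cs(1) f] ellipse_focal_sum[OF cs(2) f] by simp_all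
  have p: "mixture_point a v w \<theta> t - (a + (b + d) / 2) = l *\<^sub>R ep + (1 - l) *\<^sub>R em"
    unfolding mixture_point_def ep_def em_def l_def X_def Y_def c_def
    by (simp add: v scaleR_conv_of_real field_simps)
  have "0 \<le> l" "l \<le> 1"
    unfolding l_def using cos_ge_minus_one[of t] cos_le_one[of t] by (simp_all del: cos_ge_minus_one cos_le_one)
  then have "cmod (l *\<^sub>R ep + (1 - l) *\<^sub>R em - f) + cmod (l *\<^sub>R ep + (1 - l) *\<^sub>R em - - f)
      \<le> l * (cmod (ep - f) + cmod (ep - - f)) + (1 - l) * (cmod (em - f) + cmod (em - - f))"
    by (rule sum_dist_convex_combination_le)
  also have "\<dots> = cmod b + cmod d"
    unfolding on_ellipse by (simp add: algebra_simps)
  finally have bound: "cmod (mixture_point a v w \<theta> t - (a + (b + d) / 2) - f)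
      + cmod (mixture_point a v w \<theta> t - (a + (b + d) / 2) - - f) \<le> cmod b + cmod d"
    unfolding p .
  have foci: "mixture_point a v w \<theta> t - (a + b) = mixture_point a v w \<theta> t - (a + (b + d) / 2) - f"
    "mixture_point a v w \<theta> t - (a + d) = mixture_point a v w \<theta> t - (a + (b + d) / 2) - - f"
    by (simp_all add: f_def field_simps)
  show ?thesis
    unfolding foci by (rule bound)
qed

section \<open>\<open>M\<^sub>i\<close> as an image of the uniform measure on \<open>[0, 1] \<times> [0, \<pi>]\<close>\<close>

lemma csqrt_of_real_mult:
  assumes "0 \<le> r"
  shows "csqrt (of_real r * z) = of_real (sqrt r) * csqrt z"
proof (rule csqrt_unique)
  show "(of_real (sqrt r) * csqrt z)\<^sup>2 = of_real r * z"
    using assms by (simp add: power_mult_distrib flip: of_real_power)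
  show "0 < Re (of_real (sqrt r) * csqrt z)
        \<or> Re (of_real (sqrt r) * csqrt z) = 0 \<and> 0 \<le> Im (of_real (sqrt r) * csqrt z)"
    using csqrt_principal[of z] assms by (cases "r = 0") auto
qed

lemma two_csqrt_psi_eq_arc_scale:
  assumes "0 \<le> \<theta>" "\<theta> \<le> 1"
  shows "2 * csqrt (- w * (1 - (of_real \<theta>)\<^sup>2) * (of_real \<theta>)\<^sup>2) = of_real (arc_scale \<theta>) * csqrt (- w)"
proof -
  have e: "- w * (1 - (of_real \<theta>)\<^sup>2) * (of_real \<theta>)\<^sup>2 = of_real ((1 - \<theta>\<^sup>2) * \<theta>\<^sup>2) * (- w)"
    by (simp add: algebra_simps)
  have nonneg: "0 \<le> (1 - \<theta>\<^sup>2) * \<theta>\<^sup>2"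
    using assms by (simp add: power_le_one)
  have "sqrt ((1 - \<theta>\<^sup>2) * \<theta>\<^sup>2) = \<theta> * sqrt (1 - \<theta>\<^sup>2)"
    using assms by (simp add: real_sqrt_mult)
  then show ?thesis
    unfolding e csqrt_of_real_mult[OF nonneg] arc_scale_def by simp
qed

lemma cos_substitution_arcsine:
  assumes "0 < t" "t < pi"
  shows "(1 - cos t) / 2 \<in> {0<..<1}" and "sqrt ((1 - cos t) / 2 * (1 - (1 - cos t) / 2)) = sin t / 2"
    and "0 < sin t"
proof -
  show sin: "0 < sin t" using assms by (rule sin_gt_zero)
  have "(cos t)\<^sup>2 < 1"
    using sin sin_squared_eq[of t] by (smt (verit) zero_less_power)
  then show "(1 - cos t) / 2 \<in> {0<..<1}"
    by (auto simp: abs_square_less_1 abs_less_iff)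
  have "(1 - cos t) / 2 * (1 - (1 - cos t) / 2) = (1 - (cos t)\<^sup>2) / 4"
    by (simp add: field_simps power2_eq_square)
  also have "\<dots> = (sin t / 2)\<^sup>2"
    by (simp add: power_divide sin_squared_eq)
  finally show "sqrt ((1 - cos t) / 2 * (1 - (1 - cos t) / 2)) = sin t / 2"
    using sin by simp
qed

lemma emeasure_arcsine_measure:
  assumes A[measurable]: "A \<in> sets borel"
  shows "emeasure (arcsine_measure al1 al2) A =
    (\<integral>\<^sup>+ t. ennreal (indicator {0..pi} t / pi * indicator A (al1 + of_real ((1 - cos t) / 2) * (al2 - al1))) \<partial>lborel)"
proof -
  define F where "F = (\<lambda>s::real. al1 + of_real s * (al2 - al1))"
  define D where "D = (\<lambda>s::real. ennreal (indicator {0<..<1} s / (pi * sqrt (s * (1 - s)))))"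
  define h where "h = (\<lambda>s::real. indicator {0<..<1} s / (pi * sqrt (s * (1 - s))) * indicator A (F s))"
  have Fm[measurable]: "F \<in> borel_measurable borel" unfolding F_def by measurable
  have Dm[measurable]: "D \<in> borel_measurable borel" unfolding D_def by measurable
  have "emeasure (arcsine_measure al1 al2) A = emeasure (density lborel D) (F -` A \<inter> space (density lborel D))"
    unfolding arcsine_measure_def D_def[symmetric] F_def[symmetric]
    by (rule emeasure_distr) simp_all
  also have "\<dots> = (\<integral>\<^sup>+ s. D s * indicator (F -` A) s \<partial>lborel)"
    by (subst emeasure_density) (simp_all add: measurable_sets[OF Fm A, simplified])
  also have "\<dots> = (\<integral>\<^sup>+ s. ennreal (h s * indicator {(1 - cos 0) / 2..(1 - cos pi) / 2} s) \<partial>lborel)"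
    by (intro nn_integral_cong) (auto simp: D_def h_def indicator_def)
  also have "\<dots> = (\<integral>\<^sup>+ t. ennreal (h ((1 - cos t) / 2) * (sin t / 2) * indicator {0..pi} t) \<partial>lborel)"
  proof (rule nn_integral_substitution[where g="\<lambda>t. (1 - cos t) / 2" and g'="\<lambda>t. sin t / 2"])
    show "set_borel_measurable borel {(1 - cos 0) / 2..(1 - cos pi) / 2} h"
      unfolding set_borel_measurable_def h_def by measurable
    show "((\<lambda>t. (1 - cos t) / 2) has_real_derivative sin x / 2) (at x)" for x
      by (auto intro!: derivative_eq_intros)
    show "continuous_on {0..pi} (\<lambda>t. sin t / 2)"
      by (intro continuous_intros) auto
    show "0 \<le> sin x / 2" if "x \<in> {0..pi}" for x
      using that by (simp add: sin_ge_zero)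
  qed simp
  also have "\<dots> = (\<integral>\<^sup>+ t. ennreal (indicator {0..pi} t / pi * indicator A (al1 + of_real ((1 - cos t) / 2) * (al2 - al1))) \<partial>lborel)"
  proof (rule nn_integral_cong_AE)
    have "AE t in lborel. t \<noteq> 0" "AE t in lborel. t \<noteq> pi" by (rule AE_lborel_singleton)+
    then show "AE t in lborel. ennreal (h ((1 - cos t) / 2) * (sin t / 2) * indicator {0..pi} t) =
       ennreal (indicator {0..pi} t / pi * indicator A (al1 + of_real ((1 - cos t) / 2) * (al2 - al1)))"
    proof eventually_elim
      case (elim t)
      show ?case
      proof (cases "t \<in> {0..pi}")
        case True
        then have "0 < t" "t < pi" using elim by auto
        from cos_substitution_arcsine[OF this] True show ?thesis
          unfolding h_def F_def by (simp add: field_simps)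
      qed simp
    qed
  qed
  finally show ?thesis .
qed

definition mixture_distr :: "complex \<Rightarrow> complex \<Rightarrow> complex \<Rightarrow> complex measure" where
  "mixture_distr a v w =
     distr (density lborel (\<lambda>x::real \<times> real. ennreal (indicator ({0..1} \<times> {0..pi}) x / pi)))
           borel (\<lambda>x. mixture_point a v w (fst x) (snd x))"

lemma borel_measurable_mixture_point[measurable]:
  "(\<lambda>x. mixture_point a v w (fst x) (snd x)) \<in> borel_measurable borel"
  by (intro borel_measurable_continuous_onI continuous_intros)

lemma arcsine_measure_endpoints_mixture_point:
  assumes "0 \<le> \<theta>" "\<theta> \<le> 1"
  shows "(a - v * (of_real \<theta>)\<^sup>2 - 2 * csqrt (- w * (1 - (of_real \<theta>)\<^sup>2) * (of_real \<theta>)\<^sup>2))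
     + of_real ((1 - cos t) / 2) * ((a - v * (of_real \<theta>)\<^sup>2 + 2 * csqrt (- w * (1 - (of_real \<theta>)\<^sup>2) * (of_real \<theta>)\<^sup>2))
        - (a - v * (of_real \<theta>)\<^sup>2 - 2 * csqrt (- w * (1 - (of_real \<theta>)\<^sup>2) * (of_real \<theta>)\<^sup>2)))
     = mixture_point a v w \<theta> t"
  unfolding two_csqrt_psi_eq_arc_scale[OF assms] mixture_point_def by (simp add: field_simps)

lemma emeasure_mixture_distr:
  assumes A[measurable]: "A \<in> sets borel"
  shows "emeasure (mixture_distr a v w) A
       = (\<integral>\<^sup>+ \<theta>. \<integral>\<^sup>+ t. ennreal (indicator {0..1} \<theta>
            * (indicator {0..pi} t / pi * indicator A (mixture_point a v w \<theta> t))) \<partial>lborel \<partial>lborel)"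
proof -
  define f where "f = (\<lambda>x::real \<times> real. ennreal (indicator {0..1} (fst x)
      * (indicator {0..pi} (snd x) / pi * indicator A (mixture_point a v w (fst x) (snd x)))))"
  have [measurable]: "(\<lambda>x. fst x :: real) \<in> borel_measurable borel" "(\<lambda>x. snd x :: real) \<in> borel_measurable borel"
    by (intro borel_measurable_continuous_onI continuous_intros)+
  have [measurable]: "({0..1} \<times> {0..pi} :: (real \<times> real) set) \<in> sets borel"
    by (intro borel_closed closed_Times) auto
  have [measurable]: "f \<in> borel_measurable (lborel \<Otimes>\<^sub>M lborel)"
    unfolding lborel_prod f_def measurable_lborel2 by measurable
  have dens: "(\<lambda>x::real \<times> real. ennreal (indicator ({0..1} \<times> {0..pi}) x / pi)) \<in> borel_measurable lborel"
    unfolding measurable_lborel2 by measurable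
  have "emeasure (mixture_distr a v w) A
      = (\<integral>\<^sup>+ x. ennreal (indicator ({0..1} \<times> {0..pi}) x / pi)
            * indicator ((\<lambda>x. mixture_point a v w (fst x) (snd x)) -` A) x \<partial>lborel)"
    unfolding mixture_distr_def
    by (subst emeasure_distr) (simp_all add: emeasure_density dens measurable_sets[OF borel_measurable_mixture_point A, simplified])
  also have "\<dots> = integral\<^sup>N (lborel \<Otimes>\<^sub>M lborel) f"
    unfolding lborel_prod by (intro nn_integral_cong) (auto simp: f_def indicator_def)
  also have "\<dots> = (\<integral>\<^sup>+ \<theta>. \<integral>\<^sup>+ t. f (\<theta>, t) \<partial>lborel \<partial>lborel)"
    by (rule lborel.nn_integral_fst[symmetric]) measurable
  finally show ?thesis by (simp add: f_def)
qed

lemma M_meas_eq_mixture_distr: "M_meas a v w = mixture_distr a v w"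
proof -
  define om where "om = (\<lambda>\<theta>. let xi = a - v * (of_real \<theta>)\<^sup>2; psi = - w * (1 - (of_real \<theta>)\<^sup>2) * (of_real \<theta>)\<^sup>2
        in arcsine_measure (xi - 2 * csqrt psi) (xi + 2 * csqrt psi))"
  have "sets (mixture_distr a v w) = sets borel" "space (mixture_distr a v w) = UNIV"
    unfolding mixture_distr_def by simp_all
  then have "mixture_distr a v w = measure_of UNIV (sets borel) (emeasure (mixture_distr a v w))"
    using measure_of_of_measure[of "mixture_distr a v w"] by simp
  also have "\<dots> = measure_of UNIV (sets borel) (\<lambda>A. \<integral>\<^sup>+ \<theta>. indicator {0..1} \<theta> * emeasure (om \<theta>) A \<partial>lborel)"
  proof (rule measure_of_eq)
    fix A :: "complex set" assume "A \<in> sigma_sets UNIV (sets borel)"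
    then have A: "A \<in> sets borel"
      using sets.sigma_sets_eq[of "borel :: complex measure"] by simp
    show "emeasure (mixture_distr a v w) A = (\<integral>\<^sup>+ \<theta>. indicator {0..1} \<theta> * emeasure (om \<theta>) A \<partial>lborel)"
      unfolding emeasure_mixture_distr[OF A]
    proof (rule nn_integral_cong)
      fix \<theta> :: real
      show "(\<integral>\<^sup>+ t. ennreal (indicator {0..1} \<theta> * (indicator {0..pi} t / pi
              * indicator A (mixture_point a v w \<theta> t))) \<partial>lborel)
          = indicator {0..1} \<theta> * emeasure (om \<theta>) A"
      proof (cases "\<theta> \<in> {0..1}")
        case True
        then have "0 \<le> \<theta>" "\<theta> \<le> 1" by auto
        with True show ?thesis
          unfolding om_def Let_def emeasure_arcsine_measure[OF A]
            arcsine_measure_endpoints_mixture_point[OF \<open>0 \<le> \<theta>\<close> \<open>\<theta> \<le> 1\<close>]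
          by simp
      qed simp
    qed
  qed simp
  also have "\<dots> = M_meas a v w"
    unfolding M_meas_def mixture_measure_def om_def ..
  finally show ?thesis ..
qed

section \<open>The Cauchy transform off the support\<close>

text \<open>By \<open>diff_mixture_point\<close>, \<open>fibre_integral a v w n z \<theta> = \<integral>\<^sub>0\<^sup>\<pi> (z - mixture_point a v w \<theta> t)\<^sup>-\<^sup>n dt\<close>.\<close>

definition fibre_integral :: "complex \<Rightarrow> complex \<Rightarrow> complex \<Rightarrow> nat \<Rightarrow> complex \<Rightarrow> real \<Rightarrow> complex" where
  "fibre_integral a v w n z \<theta> =
     cos_kernel_integral n (z - a + v * (of_real \<theta>)\<^sup>2) (of_real (arc_scale \<theta>) * csqrt (- w))"

definition mixture_integral :: "complex \<Rightarrow> complex \<Rightarrow> complex \<Rightarrow> nat \<Rightarrow> complex \<Rightarrow> complex" where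
  "mixture_integral a v w n z = integral {0..1} (fibre_integral a v w n z)"

lemma diff_mixture_point:
  "z - mixture_point a v w \<theta> t
     = (z - a + v * (of_real \<theta>)\<^sup>2) + of_real (arc_scale \<theta>) * csqrt (- w) * of_real (cos t)"
  unfolding mixture_point_def by (simp add: algebra_simps)

locale off_support =
  fixes a v w :: complex and U :: "complex set"
  assumes open_domain: "open U"
    and avoids_support: "\<And>z \<theta> t. z \<in> U \<Longrightarrow> \<theta> \<in> {0..1} \<Longrightarrow> z \<noteq> mixture_point a v w \<theta> t"
begin

lemma fibre_regular:
  assumes "z \<in> U" "\<theta> \<in> {0..1}"
  shows "\<forall>t\<in>{0..pi}. (z - a + v * (of_real \<theta>)\<^sup>2) + of_real (arc_scale \<theta>) * csqrt (- w) * of_real (cos t) \<noteq> 0"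
  using avoids_support[OF assms] by (simp flip: diff_mixture_point)

lemma continuous_on_fibre_integral:
  "continuous_on (U \<times> {0..1}) (\<lambda>(z, \<theta>). fibre_integral a v w n z \<theta>)"
proof -
  have "continuous_on (U \<times> {0..1})
          (\<lambda>p. (\<lambda>(A, B). cos_kernel_integral n A B)
                 (fst p - a + v * (of_real (snd p))\<^sup>2, of_real (arc_scale (snd p)) * csqrt (- w)))"
    by (rule continuous_on_compose2[OF continuous_on_cos_kernel_integral])
       (use fibre_regular in \<open>auto intro!: continuous_intros\<close>)
  then show ?thesis
    by (simp add: fibre_integral_def case_prod_beta)
qed

lemma continuous_on_fibre_integral_theta:
  "z \<in> U \<Longrightarrow> continuous_on {0..1} (fibre_integral a v w n z)"
  by (rule continuous_on_compose2[OF continuous_on_fibre_integral, where f="\<lambda>\<theta>. (z, \<theta>)", simplified])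
     (auto intro!: continuous_intros)

lemma has_field_derivative_fibre_integral:
  assumes "z \<in> U" "\<theta> \<in> {0..1}"
  shows "((\<lambda>z. fibre_integral a v w n z \<theta>) has_field_derivative
           - of_nat n * fibre_integral a v w (Suc n) z \<theta>) (at z)"
proof -
  have shift: "z - a + v * (of_real \<theta>)\<^sup>2 = z + (v * (of_real \<theta>)\<^sup>2 - a)" for z
    by simp
  have "((\<lambda>A. cos_kernel_integral n A (of_real (arc_scale \<theta>) * csqrt (- w))) has_field_derivative
          - of_nat n * fibre_integral a v w (Suc n) z \<theta>) (at (z + (v * (of_real \<theta>)\<^sup>2 - a)))"
    using has_field_derivative_cos_kernel_integral[OF fibre_regular[OF assms]]
    unfolding fibre_integral_def shift .
  then show ?thesis
    unfolding fibre_integral_def shift by (rule DERIV_shift[THEN iffD1])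
qed

lemma has_field_derivative_mixture_integral:
  assumes z: "z \<in> U"
  shows "((\<lambda>z. mixture_integral a v w n z) has_field_derivative
           - of_nat n * mixture_integral a v w (Suc n) z) (at z)"
proof -
  obtain e where e: "e > 0" "ball z e \<subseteq> U" by (rule openE[OF open_domain z])
  have "((\<lambda>z. integral (cbox 0 1) (fibre_integral a v w n z)) has_field_derivative
        integral (cbox 0 1) (\<lambda>\<theta>. - of_nat n * fibre_integral a v w (Suc n) z \<theta>)) (at z within ball z e)"
  proof (rule leibniz_rule_field_derivative)
    fix x \<theta> assume "x \<in> ball z e" "\<theta> \<in> cbox (0::real) 1"
    with e show "((\<lambda>x. fibre_integral a v w n x \<theta>) has_field_derivative
                   - of_nat n * fibre_integral a v w (Suc n) x \<theta>) (at x within ball z e)"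
      by (intro has_field_derivative_at_within[OF has_field_derivative_fibre_integral]) auto
  next
    fix x assume "x \<in> ball z e"
    with e have "x \<in> U" by auto
    then show "fibre_integral a v w n x integrable_on cbox 0 1"
      unfolding cbox_interval by (intro integrable_continuous_real continuous_on_fibre_integral_theta)
  next
    have "continuous_on (ball z e \<times> cbox 0 1) (\<lambda>(x, \<theta>). fibre_integral a v w (Suc n) x \<theta>)"
      by (rule continuous_on_subset[OF continuous_on_fibre_integral]) (use e in auto)
    then show "continuous_on (ball z e \<times> cbox 0 1) (\<lambda>(x, \<theta>). - of_nat n * fibre_integral a v w (Suc n) x \<theta>)"
      unfolding case_prod_beta by (intro continuous_intros)
  qed (use e in auto)
  then show ?thesis
    unfolding mixture_integral_def integral_mult_right cbox_interval
      at_within_open[OF centre_in_ball[THEN iffD2, OF \<open>e > 0\<close>] open_ball] .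
qed

lemma cauchy_transform_eq_mixture_integral:
  assumes z: "z \<in> U"
  shows "cauchy_transform (M_meas a v w) z = mixture_integral a v w 1 z / pi"
proof -
  define G where "G = (\<lambda>x::real \<times> real. indicator ({0..1} \<times> {0..pi}) x / pi)"
  define h where "h = (\<lambda>x::real \<times> real. (1 / pi) *\<^sub>R (1 / (z - mixture_point a v w (fst x) (snd x))))"
  have box: "({0..1} \<times> {0..pi} :: (real \<times> real) set) = cbox (0, 0) (1, pi)"
    by (simp add: cbox_Pair_eq)
  have "z - mixture_point a v w (fst x) (snd x) \<noteq> 0" if "x \<in> cbox (0, 0) (1, pi)" for x
    using that avoids_support[OF z, of "fst x" "snd x"] by (auto simp: cbox_Pair_eq)
  then have "continuous_on (cbox (0, 0) (1, pi)) h"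
    unfolding h_def by (intro continuous_intros) auto
  then have h: "set_integrable lborel (cbox (0, 0) (1, pi)) h"
    by (rule borel_integrable_compact[OF compact_cbox, folded set_integrable_def])
  have [measurable]: "({0..1} \<times> {0..pi} :: (real \<times> real) set) \<in> sets borel"
    by (intro borel_closed closed_Times) auto
  have [measurable]: "G \<in> borel_measurable borel"
    unfolding G_def by measurable
  have "cauchy_transform (M_meas a v w) z = integral\<^sup>L (mixture_distr a v w) (\<lambda>\<xi>. 1 / (z - \<xi>))"
    unfolding cauchy_transform_def M_meas_eq_mixture_distr ..
  also have "\<dots> = integral\<^sup>L (density lborel (\<lambda>x. ennreal (G x))) (\<lambda>x. 1 / (z - mixture_point a v w (fst x) (snd x)))"
    unfolding mixture_distr_def G_def by (rule integral_distr) measurable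
  also have "\<dots> = integral\<^sup>L lborel (\<lambda>x. G x *\<^sub>R (1 / (z - mixture_point a v w (fst x) (snd x))))"
    by (rule integral_density) (auto simp: G_def)
  also have "\<dots> = integral\<^sup>L lborel (\<lambda>x. indicator (cbox (0, 0) (1, pi)) x *\<^sub>R h x)"
    unfolding box[symmetric] by (intro Bochner_Integration.integral_cong) (auto simp: G_def h_def indicator_def)
  also have "\<dots> = integral (cbox (0, 0) (1, pi)) h"
    using set_borel_integral_eq_integral(2)[OF h] unfolding set_lebesgue_integral_def .
  also have "\<dots> = integral (cbox 0 1) (\<lambda>\<theta>. integral (cbox 0 pi) (\<lambda>t. h (\<theta>, t)))"
    by (rule integral_prod_continuous[OF \<open>continuous_on _ h\<close>])
  also have "\<dots> = mixture_integral a v w 1 z / pi"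
    unfolding mixture_integral_def fibre_integral_def cos_kernel_integral_def h_def diff_mixture_point
      power_one_right cbox_interval fst_conv snd_conv
    by (simp add: scaleR_conv_of_real divide_inverse integral_mult_right mult.commute)
  finally show ?thesis .
qed

end

section \<open>A primitive in \<open>\<theta>\<close>\<close>

definition fibre_discriminant :: "complex \<Rightarrow> complex \<Rightarrow> complex \<Rightarrow> complex \<Rightarrow> complex" where
  "fibre_discriminant v w u y = (u + v * y\<^sup>2)\<^sup>2 + 4 * w * y\<^sup>2 * (1 - y\<^sup>2)"

definition fibre_discriminant_deriv :: "complex \<Rightarrow> complex \<Rightarrow> complex \<Rightarrow> complex \<Rightarrow> complex" where
  "fibre_discriminant_deriv v w u y = 4 * v * y * (u + v * y\<^sup>2) + 4 * w * (2 * y - 4 * y ^ 3)"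

definition ode_numerator :: "complex \<Rightarrow> complex \<Rightarrow> complex \<Rightarrow> complex \<Rightarrow> complex" where
  "ode_numerator v w u y =
     (u ^ 3 + v * u\<^sup>2 + w * u) * (3 * (u + v * y\<^sup>2)\<^sup>2 - fibre_discriminant v w u y)
     - (3 * u\<^sup>2 + 2 * v * u + w) * (u + v * y\<^sup>2) * fibre_discriminant v w u y
     + (6 * u + 2 * v) / 8 * (fibre_discriminant v w u y)\<^sup>2"

text \<open>The coefficients of the even quartic \<open>R(y) = r\<^sub>0 + r\<^sub>1 y\<^sup>2 + r\<^sub>2 y\<^sup>4\<close> solve the linear system
  expressing \<open>primitive_identity\<close>; \<open>r\<^sub>1\<close> is written so that \<open>R(1) = -(u + v)\<^sup>3/4\<close>.\<close>

definition primitive_coeffs :: "complex \<Rightarrow> complex \<Rightarrow> complex \<Rightarrow> complex \<times> complex \<times> complex" where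
  "primitive_coeffs v w u =
     (let r0 = (v * u\<^sup>2 + 4 * w * u - u ^ 3) / 4;
          r2 = - (3 * u + v) * (v\<^sup>2 - 4 * w) / 4
      in (r0, - ((u + v) ^ 3 / 4) - r0 - r2, r2))"

definition primitive_factor :: "complex \<Rightarrow> complex \<Rightarrow> complex \<Rightarrow> complex \<Rightarrow> complex" where
  "primitive_factor v w u y =
     (case primitive_coeffs v w u of (r0, r1, r2) \<Rightarrow> r0 + r1 * y\<^sup>2 + r2 * y ^ 4)"

definition primitive_factor_deriv :: "complex \<Rightarrow> complex \<Rightarrow> complex \<Rightarrow> complex \<Rightarrow> complex" where
  "primitive_factor_deriv v w u y =
     (case primitive_coeffs v w u of (r0, r1, r2) \<Rightarrow> 2 * r1 * y + 4 * r2 * y ^ 3)"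

lemma primitive_identity:
  "(primitive_factor v w u y + y * primitive_factor_deriv v w u y) * fibre_discriminant v w u y
     - 3 / 2 * y * primitive_factor v w u y * fibre_discriminant_deriv v w u y
   = ode_numerator v w u y"
  unfolding primitive_factor_def primitive_factor_deriv_def primitive_coeffs_def Let_def
    fibre_discriminant_def fibre_discriminant_deriv_def ode_numerator_def
  by (simp add: field_simps) algebra

lemma has_field_derivative_fibre_discriminant:
  "(fibre_discriminant v w u has_field_derivative fibre_discriminant_deriv v w u y) (at y)"
  unfolding fibre_discriminant_def[abs_def] fibre_discriminant_deriv_def
  by (auto intro!: derivative_eq_intros simp: algebra_simps power2_eq_square power3_eq_cube)

lemma has_real_derivative_arc_scale:
  assumes "\<bar>\<theta>\<bar> < 1"
  shows "(arc_scale has_real_derivative (2 - 4 * \<theta>\<^sup>2) / sqrt (1 - \<theta>\<^sup>2)) (at \<theta>)"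
proof -
  have pos: "0 < 1 - \<theta>\<^sup>2" using assms by (simp add: abs_square_less_1)
  have "(arc_scale has_real_derivative
          2 * sqrt (1 - \<theta>\<^sup>2) + 2 * \<theta> * (inverse (sqrt (1 - \<theta>\<^sup>2)) / 2 * - (2 * \<theta>))) (at \<theta>)"
    unfolding arc_scale_def[abs_def] using pos
    by (auto intro!: derivative_eq_intros simp flip: power2_eq_square)
  moreover have "2 * sqrt (1 - \<theta>\<^sup>2) + 2 * \<theta> * (inverse (sqrt (1 - \<theta>\<^sup>2)) / 2 * - (2 * \<theta>))
      = (2 - 4 * \<theta>\<^sup>2) / sqrt (1 - \<theta>\<^sup>2)"
    using pos by (simp add: field_simps power2_eq_square)
  ultimately show ?thesis by simp
qed

lemma arc_scale_times_deriv:
  assumes "\<bar>\<theta>\<bar> < 1"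
  shows "arc_scale \<theta> * ((2 - 4 * \<theta>\<^sup>2) / sqrt (1 - \<theta>\<^sup>2)) = 4 * \<theta> - 8 * \<theta> ^ 3"
proof -
  define r where "r = sqrt (1 - \<theta>\<^sup>2)"
  have "r \<noteq> 0" using assms by (simp add: r_def abs_square_eq_1)
  then show ?thesis
    unfolding arc_scale_def r_def[symmetric] by (simp add: field_simps power3_eq_cube power2_eq_square)
qed

lemma fibre_discriminant_deriv_eq:
  assumes "\<bar>\<theta>\<bar> < 1"
  shows "of_real (arc_scale \<theta>) * csqrt (- w) * (of_real ((2 - 4 * \<theta>\<^sup>2) / sqrt (1 - \<theta>\<^sup>2)) * csqrt (- w))
         - (u + v * (of_real \<theta>)\<^sup>2) * (2 * v * of_real \<theta>)
       = - fibre_discriminant_deriv v w u (of_real \<theta>) / 2"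
proof -
  have "of_real (arc_scale \<theta>) * csqrt (- w) * (of_real ((2 - 4 * \<theta>\<^sup>2) / sqrt (1 - \<theta>\<^sup>2)) * csqrt (- w))
      = of_real (arc_scale \<theta> * ((2 - 4 * \<theta>\<^sup>2) / sqrt (1 - \<theta>\<^sup>2))) * (csqrt (- w))\<^sup>2"
    unfolding of_real_mult power2_eq_square by (simp only: mult_ac)
  also have "\<dots> = - w * of_real (4 * \<theta> - 8 * \<theta> ^ 3)"
    unfolding arc_scale_times_deriv[OF assms] by simp
  finally have \<beta>: "of_real (arc_scale \<theta>) * csqrt (- w) * (of_real ((2 - 4 * \<theta>\<^sup>2) / sqrt (1 - \<theta>\<^sup>2)) * csqrt (- w))
      = - w * of_real (4 * \<theta> - 8 * \<theta> ^ 3)" .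
  show ?thesis
    unfolding \<beta> unfolding fibre_discriminant_deriv_def by (simp add: algebra_simps power3_eq_cube power2_eq_square)
qed

lemma fibre_discriminant_eq:
  assumes "\<theta> \<in> {0..1}"
  shows "(u + v * (of_real \<theta>)\<^sup>2)\<^sup>2 - (of_real (arc_scale \<theta>) * csqrt (- w))\<^sup>2
         = fibre_discriminant v w u (of_real \<theta>)"
proof -
  have "\<theta>\<^sup>2 \<le> 1" using assms by (simp add: power_le_one)
  then have \<beta>: "(of_real (arc_scale \<theta>) :: complex)\<^sup>2 = 4 * (of_real \<theta>)\<^sup>2 * (1 - (of_real \<theta>)\<^sup>2)"
    by (simp flip: of_real_power add: arc_scale_squared)
  show ?thesis
    unfolding power_mult_distrib \<beta> power2_csqrt by (simp add: fibre_discriminant_def algebra_simps)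
qed

context off_support
begin

lemma fibre_discriminant_nonzero:
  assumes "z \<in> U" "\<theta> \<in> {0..1}"
  shows "fibre_discriminant v w (z - a) (of_real \<theta>) \<noteq> 0"
  using cos_kernel_regular_imp_discriminant_nonzero[OF fibre_regular[OF assms]]
  unfolding fibre_discriminant_eq[OF assms(2)] .

lemma fibre_integral_2:
  assumes "z \<in> U" "\<theta> \<in> {0..1}"
  shows "fibre_integral a v w 2 z \<theta>
       = (z - a + v * (of_real \<theta>)\<^sup>2) * fibre_integral a v w 1 z \<theta> / fibre_discriminant v w (z - a) (of_real \<theta>)"
  using cos_kernel_integral_recurrence[OF fibre_regular[OF assms]] fibre_discriminant_nonzero[OF assms]
  unfolding fibre_integral_def fibre_discriminant_eq[OF assms(2), symmetric]
  by (simp add: field_simps)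

lemma fibre_integral_3:
  assumes "z \<in> U" "\<theta> \<in> {0..1}"
  shows "2 * fibre_integral a v w 3 z \<theta>
       = (3 * (z - a + v * (of_real \<theta>)\<^sup>2)\<^sup>2 / (fibre_discriminant v w (z - a) (of_real \<theta>))\<^sup>2
          - 1 / fibre_discriminant v w (z - a) (of_real \<theta>)) * fibre_integral a v w 1 z \<theta>"
  using cos_kernel_integral_3[OF fibre_regular[OF assms]]
  unfolding fibre_integral_def fibre_discriminant_eq[OF assms(2), symmetric] .

lemma has_vector_derivative_fibre_integral_1:
  assumes z: "z \<in> U" and "w \<noteq> 0" and \<theta>: "\<theta> \<in> {0<..<1}"
  shows "((\<lambda>\<theta>. fibre_integral a v w 1 z \<theta>) has_vector_derivative
           - fibre_discriminant_deriv v w (z - a) (of_real \<theta>) / (2 * fibre_discriminant v w (z - a) (of_real \<theta>))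
           * fibre_integral a v w 1 z \<theta>) (at \<theta>)"
proof -
  define m where "m = csqrt (- w)"
  define dB where "dB x = of_real ((2 - 4 * x\<^sup>2) / sqrt (1 - x\<^sup>2)) * m" for x :: real
  have deriv: "((\<lambda>x. cos_kernel_integral 1 (z - a + v * (of_real x)\<^sup>2) (of_real (arc_scale x) * m))
        has_vector_derivative
          (of_real (arc_scale \<theta>) * m * dB \<theta> - (z - a + v * (of_real \<theta>)\<^sup>2) * (2 * v * of_real \<theta>))
          / ((z - a + v * (of_real \<theta>)\<^sup>2)\<^sup>2 - (of_real (arc_scale \<theta>) * m)\<^sup>2)
          * cos_kernel_integral 1 (z - a + v * (of_real \<theta>)\<^sup>2) (of_real (arc_scale \<theta>) * m)) (at \<theta>)"
  proof (rule has_vector_derivative_cos_kernel_integral_log)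
    fix x :: real assume "x \<in> {0<..<1}"
    then have "\<bar>x\<bar> < 1" by auto
    show "((\<lambda>x. z - a + v * (of_real x)\<^sup>2) has_vector_derivative 2 * v * of_real x) (at x)"
      by (auto intro!: derivative_eq_intros simp: power2_eq_square)
    show "((\<lambda>x. of_real (arc_scale x) * m) has_vector_derivative dB x) (at x)"
      unfolding dB_def using has_real_derivative_arc_scale[OF \<open>\<bar>x\<bar> < 1\<close>]
      by (auto intro!: derivative_eq_intros)
  next
    fix x t :: real assume "x \<in> {0<..<1}" "t \<in> {0..pi}"
    then show "z - a + v * (of_real x)\<^sup>2 + of_real (arc_scale x) * m * of_real (cos t) \<noteq> 0"
      using fibre_regular[OF z, of x] by (auto simp: m_def)
  next
    show "continuous_on {0<..<1} dB"
      unfolding dB_def by (intro continuous_intros) (auto simp: power2_eq_1_iff)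
    have "0 < arc_scale \<theta>"
      using \<theta> by (simp add: arc_scale_def abs_square_less_1)
    then show "of_real (arc_scale \<theta>) * m \<noteq> 0"
      using \<open>w \<noteq> 0\<close> by (simp add: m_def)
  qed (use \<theta> in \<open>auto intro!: continuous_intros\<close>)
  have "\<bar>\<theta>\<bar> < 1" "\<theta> \<in> {0..1}" using \<theta> by auto
  with deriv[unfolded dB_def m_def, unfolded fibre_discriminant_deriv_eq[OF \<open>\<bar>\<theta>\<bar> < 1\<close>]] show ?thesis
    unfolding fibre_discriminant_eq[OF \<open>\<theta> \<in> {0..1}\<close>] fibre_integral_def
    by (simp add: divide_divide_eq_left)
qed

end

text \<open>For \<open>Q = c (u\<^sup>3 + v u\<^sup>2 + w u)\<close>, \<open>u = z - a\<close>, the left-hand side of the equation equals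
  \<open>c/\<pi> \<cdot> ode_combination v w u J + c/4\<close>, since the derivatives of the Cauchy transform are
  \<open>-J\<^sub>2/\<pi>\<close> and \<open>2 J\<^sub>3/\<pi>\<close>.\<close>

definition ode_combination :: "complex \<Rightarrow> complex \<Rightarrow> complex \<Rightarrow> (nat \<Rightarrow> complex) \<Rightarrow> complex" where
  "ode_combination v w u I =
     2 * (u ^ 3 + v * u\<^sup>2 + w * u) * I 3 - (3 * u\<^sup>2 + 2 * v * u + w) * I 2 + (6 * u + 2 * v) / 8 * I 1"

definition ode_primitive :: "complex \<Rightarrow> complex \<Rightarrow> complex \<Rightarrow> complex \<Rightarrow> complex" where
  "ode_primitive v w u y = y * primitive_factor v w u y / fibre_discriminant v w u y"

lemma has_field_derivative_primitive_factor:
  "(primitive_factor v w u has_field_derivative primitive_factor_deriv v w u y) (at y)"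
  unfolding primitive_factor_def[abs_def] primitive_factor_deriv_def primitive_coeffs_def Let_def
  by (auto intro!: derivative_eq_intros simp: field_simps power2_eq_square power3_eq_cube)

lemma has_field_derivative_ode_primitive:
  assumes "fibre_discriminant v w u y \<noteq> 0"
  shows "(ode_primitive v w u has_field_derivative
           ((primitive_factor v w u y + y * primitive_factor_deriv v w u y) * fibre_discriminant v w u y
            - y * primitive_factor v w u y * fibre_discriminant_deriv v w u y) / (fibre_discriminant v w u y)\<^sup>2) (at y)"
  unfolding ode_primitive_def[abs_def] using assms
  by (auto intro!: derivative_eq_intros has_field_derivative_primitive_factor has_field_derivative_fibre_discriminant
           simp: power2_eq_square algebra_simps)

context off_support
begin

lemma fibre_ode_combination:
  assumes "z \<in> U" "\<theta> \<in> {0..1}"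
  shows "ode_combination v w (z - a) (\<lambda>n. fibre_integral a v w n z \<theta>)
       = ode_numerator v w (z - a) (of_real \<theta>) / (fibre_discriminant v w (z - a) (of_real \<theta>))\<^sup>2
         * fibre_integral a v w 1 z \<theta>"
proof -
  let ?u = "z - a" and ?I = "\<lambda>n. fibre_integral a v w n z \<theta>"
  have "ode_combination v w ?u ?I
      = (?u ^ 3 + v * ?u\<^sup>2 + w * ?u) * (2 * ?I 3) - (3 * ?u\<^sup>2 + 2 * v * ?u + w) * ?I 2
        + (6 * ?u + 2 * v) / 8 * ?I 1"
    by (simp add: ode_combination_def)
  also have "\<dots> = ode_numerator v w ?u (of_real \<theta>) / (fibre_discriminant v w ?u (of_real \<theta>))\<^sup>2 * ?I 1"
    using fibre_discriminant_nonzero[OF assms]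
    unfolding ode_numerator_def fibre_integral_3[OF assms] fibre_integral_2[OF assms]
    by (simp add: field_simps power2_eq_square)
  finally show ?thesis .
qed

lemma has_vector_derivative_ode_primitive_times_fibre:
  assumes z: "z \<in> U" and "w \<noteq> 0" and \<theta>: "\<theta> \<in> {0<..<1}"
  shows "((\<lambda>\<theta>. ode_primitive v w (z - a) (of_real \<theta>) * fibre_integral a v w 1 z \<theta>) has_vector_derivative
           ode_combination v w (z - a) (\<lambda>n. fibre_integral a v w n z \<theta>)) (at \<theta>)"
proof -
  let ?u = "z - a" and ?y = "of_real \<theta> :: complex"
  have \<theta>': "\<theta> \<in> {0..1}" using \<theta> by auto
  note P = fibre_discriminant_nonzero[OF z \<theta>']
  have "((\<lambda>\<theta>. ode_primitive v w ?u (of_real \<theta>) * fibre_integral a v w 1 z \<theta>) has_vector_derivative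
         ode_primitive v w ?u ?y * (- fibre_discriminant_deriv v w ?u ?y / (2 * fibre_discriminant v w ?u ?y) * fibre_integral a v w 1 z \<theta>)
         + ((primitive_factor v w ?u ?y + ?y * primitive_factor_deriv v w ?u ?y) * fibre_discriminant v w ?u ?y
            - ?y * primitive_factor v w ?u ?y * fibre_discriminant_deriv v w ?u ?y) / (fibre_discriminant v w ?u ?y)\<^sup>2
           * fibre_integral a v w 1 z \<theta>) (at \<theta>)"
    by (rule has_vector_derivative_mult[OF has_vector_derivative_real_field[OF has_field_derivative_ode_primitive[OF P]]
          has_vector_derivative_fibre_integral_1[OF z \<open>w \<noteq> 0\<close> \<theta>]])
  also have "ode_primitive v w ?u ?y * (- fibre_discriminant_deriv v w ?u ?y / (2 * fibre_discriminant v w ?u ?y) * fibre_integral a v w 1 z \<theta>)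
         + ((primitive_factor v w ?u ?y + ?y * primitive_factor_deriv v w ?u ?y) * fibre_discriminant v w ?u ?y
            - ?y * primitive_factor v w ?u ?y * fibre_discriminant_deriv v w ?u ?y) / (fibre_discriminant v w ?u ?y)\<^sup>2
           * fibre_integral a v w 1 z \<theta>
      = ode_numerator v w ?u ?y / (fibre_discriminant v w ?u ?y)\<^sup>2 * fibre_integral a v w 1 z \<theta>"
    unfolding primitive_identity[symmetric] ode_primitive_def using P
    by (simp add: field_simps power2_eq_square)
  finally show ?thesis
    unfolding fibre_ode_combination[OF z \<theta>'] .
qed

lemma integral_fibre_ode_combination:
  assumes z: "z \<in> U" and "w \<noteq> 0"
  shows "((\<lambda>\<theta>. ode_combination v w (z - a) (\<lambda>n. fibre_integral a v w n z \<theta>)) has_integral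
           - of_real pi / 4) {0..1}"
proof -
  let ?u = "z - a"
  let ?F = "\<lambda>\<theta>. ode_primitive v w ?u (of_real \<theta>) * fibre_integral a v w 1 z \<theta>"
  have "continuous_on {0..1} (\<lambda>\<theta>. ode_primitive v w ?u (of_real \<theta>))"
  proof (intro continuous_at_imp_continuous_on ballI)
    fix \<theta> :: real assume "\<theta> \<in> {0..1}"
    from has_field_derivative_ode_primitive[OF fibre_discriminant_nonzero[OF z this]]
    show "isCont (\<lambda>\<theta>. ode_primitive v w ?u (of_real \<theta>)) \<theta>"
      by (intro has_vector_derivative_continuous has_vector_derivative_real_field)
  qed
  then have "continuous_on {0..1} ?F"
    by (intro continuous_intros continuous_on_fibre_integral_theta z)
  then have "((\<lambda>\<theta>. ode_combination v w ?u (\<lambda>n. fibre_integral a v w n z \<theta>)) has_integral ?F 1 - ?F 0) {0..1}"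
    by (intro fundamental_theorem_of_calculus_interior has_vector_derivative_ode_primitive_times_fibre z
        \<open>w \<noteq> 0\<close>) auto
  moreover have "?F 1 - ?F 0 = - of_real pi / 4"
  proof -
    define s where "s = ?u + v"
    have P1: "fibre_discriminant v w ?u 1 = s\<^sup>2"
      by (simp add: fibre_discriminant_def s_def)
    then have "s \<noteq> 0"
      using fibre_discriminant_nonzero[OF z, of 1] by simp
    have R1: "primitive_factor v w ?u 1 = - (s ^ 3) / 4"
      by (simp add: primitive_factor_def primitive_coeffs_def Let_def s_def)
    have "fibre_integral a v w 1 z 1 = cos_kernel_integral 1 s 0"
      by (simp add: fibre_integral_def arc_scale_def s_def)
    also have "\<dots> = of_real pi / s"
      by (rule cos_kernel_integral_1_degenerate)
    finally have I1: "fibre_integral a v w 1 z 1 = of_real pi / s" .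
    show ?thesis
      unfolding ode_primitive_def of_real_1 of_real_0 P1 R1 I1
      using \<open>s \<noteq> 0\<close> by (simp add: field_simps power2_eq_square power3_eq_cube)
  qed
  ultimately show ?thesis by simp
qed

lemma mixture_ode_combination:
  assumes "z \<in> U" "w \<noteq> 0"
  shows "ode_combination v w (z - a) (\<lambda>n. mixture_integral a v w n z) = - of_real pi / 4"
proof -
  have int: "fibre_integral a v w n z integrable_on {0..1}" for n
    by (rule integrable_continuous_real[OF continuous_on_fibre_integral_theta[OF assms(1)]])
  have "integral {0..1} (\<lambda>\<theta>. ode_combination v w (z - a) (\<lambda>n. fibre_integral a v w n z \<theta>))
      = ode_combination v w (z - a) (\<lambda>n. mixture_integral a v w n z)"
    unfolding ode_combination_def mixture_integral_def by (rule integral_linear_combination[OF int int int])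
  with integral_unique[OF integral_fibre_ode_combination[OF assms]] show ?thesis
    by simp
qed

end

section \<open>The differential equation\<close>

lemma poly_pderiv_eqI:
  fixes p :: "complex poly"
  assumes "\<And>z. poly p z = f z" and "\<And>z. (f has_field_derivative f' z) (at z)"
  shows "poly (pderiv p) z = f' z"
proof -
  have "poly p = f" using assms(1) by auto
  then have "(f has_field_derivative poly (pderiv p) z) (at z)"
    using poly_DERIV[of p z] by simp
  then show ?thesis using assms(2) by (rule DERIV_unique)
qed

lemma shifted_cubic_roots:
  fixes b d v w :: complex
  assumes "b \<noteq> 0" "d \<noteq> 0" "b \<noteq> d"
    and "b ^ 3 + v * b\<^sup>2 + w * b = 0" "d ^ 3 + v * d\<^sup>2 + w * d = 0"
  shows "v = - (b + d)" and "w = b * d"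
proof -
  have "b * (b\<^sup>2 + v * b + w) = 0" "d * (d\<^sup>2 + v * d + w) = 0"
    using assms(4,5) by (simp_all add: power2_eq_square power3_eq_cube algebra_simps)
  then have b: "b\<^sup>2 + v * b + w = 0" and d: "d\<^sup>2 + v * d + w = 0"
    using assms(1,2) by simp_all
  then have "(b - d) * (b + d + v) = 0"
    by (simp add: algebra_simps power2_eq_square) (metis add_diff_cancel_left' diff_add_cancel)
  then show v: "v = - (b + d)"
    using assms(3) by (simp add: add_eq_0_iff2 eq_neg_iff_add_eq_0 add.assoc)
  show "w = b * d"
    using b unfolding v by (simp add: algebra_simps power2_eq_square)
qed

context off_support
begin

lemma has_field_derivative_mixture_integral_over_pi:
  "z \<in> U \<Longrightarrow> ((\<lambda>z. mixture_integral a v w n z / pi) has_field_derivative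
                - of_nat n * mixture_integral a v w (Suc n) z / pi) (at z)"
  using DERIV_cdivide[OF has_field_derivative_mixture_integral] by simp

lemma has_field_derivative_cauchy_transform:
  assumes "z \<in> U"
  shows "(cauchy_transform (M_meas a v w) has_field_derivative - mixture_integral a v w 2 z / pi) (at z)"
proof -
  have "((\<lambda>z. mixture_integral a v w 1 z / pi) has_field_derivative - mixture_integral a v w 2 z / pi) (at z)"
    using has_field_derivative_mixture_integral_over_pi[OF assms, of 1] by (simp add: numeral_2_eq_2)
  then show ?thesis
    by (rule has_field_derivative_transform_within_open[OF _ open_domain assms])
       (simp add: cauchy_transform_eq_mixture_integral)
qed

lemma holomorphic_on_cauchy_transform: "cauchy_transform (M_meas a v w) holomorphic_on U"
  using has_field_derivative_cauchy_transform
  unfolding holomorphic_on_def field_differentiable_def by (blast intro: has_field_derivative_at_within)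

lemma deriv_cauchy_transform:
  "z \<in> U \<Longrightarrow> deriv (cauchy_transform (M_meas a v w)) z = - mixture_integral a v w 2 z / pi"
  by (rule DERIV_imp_deriv[OF has_field_derivative_cauchy_transform])

lemma deriv2_cauchy_transform:
  assumes "z \<in> U"
  shows "deriv (deriv (cauchy_transform (M_meas a v w))) z = 2 * mixture_integral a v w 3 z / pi"
proof -
  have "((\<lambda>z. - (mixture_integral a v w 2 z / pi)) has_field_derivative
          - (- of_nat 2 * mixture_integral a v w (Suc 2) z / pi)) (at z)"
    by (rule DERIV_minus[OF has_field_derivative_mixture_integral_over_pi[OF assms]])
  then have "((\<lambda>z. - mixture_integral a v w 2 z / pi) has_field_derivative
               2 * mixture_integral a v w 3 z / pi) (at z)"
    by (simp add: numeral_3_eq_3)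
  then have "(deriv (cauchy_transform (M_meas a v w)) has_field_derivative
               2 * mixture_integral a v w 3 z / pi) (at z)"
    by (rule has_field_derivative_transform_within_open[OF _ open_domain assms])
       (simp add: deriv_cauchy_transform)
  then show ?thesis by (rule DERIV_imp_deriv)
qed

lemma cauchy_transform_ode:
  assumes "w \<noteq> 0" and Q: "\<And>z. poly Q z = c * ((z - a) ^ 3 + v * (z - a)\<^sup>2 + w * (z - a))"
    and z: "z \<in> U"
  shows "poly Q z * deriv (deriv (cauchy_transform (M_meas a v w))) z
         + poly (pderiv Q) z * deriv (cauchy_transform (M_meas a v w)) z
         + poly (pderiv (pderiv Q)) z / 8 * cauchy_transform (M_meas a v w) z
         + poly (pderiv (pderiv (pderiv Q))) z / 24 = 0"
proof -
  have Q1: "poly (pderiv Q) y = c * (3 * (y - a)\<^sup>2 + 2 * v * (y - a) + w)" for y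
    using Q by (rule poly_pderiv_eqI) (auto intro!: derivative_eq_intros simp: algebra_simps power2_eq_square)
  have Q2: "poly (pderiv (pderiv Q)) y = c * (6 * (y - a) + 2 * v)" for y
    using Q1 by (rule poly_pderiv_eqI) (auto intro!: derivative_eq_intros simp: algebra_simps power2_eq_square)
  have Q3: "poly (pderiv (pderiv (pderiv Q))) y = 6 * c" for y
    using Q2 by (rule poly_pderiv_eqI) (auto intro!: derivative_eq_intros)
  let ?J = "\<lambda>n. mixture_integral a v w n z"
  have "poly Q z * deriv (deriv (cauchy_transform (M_meas a v w))) z
         + poly (pderiv Q) z * deriv (cauchy_transform (M_meas a v w)) z
         + poly (pderiv (pderiv Q)) z / 8 * cauchy_transform (M_meas a v w) z
         + poly (pderiv (pderiv (pderiv Q))) z / 24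
      = c / pi * ode_combination v w (z - a) ?J + c / 4"
    unfolding Q Q1 Q2 Q3 deriv_cauchy_transform[OF z] deriv2_cauchy_transform[OF z]
      cauchy_transform_eq_mixture_integral[OF z] ode_combination_def
    by (simp add: field_simps)
  also have "\<dots> = 0"
    unfolding mixture_ode_combination[OF z \<open>w \<noteq> 0\<close>] by simp
  finally show ?thesis .
qed

end

lemma off_support_ellipse_exterior:
  assumes "v = - ((p - a) + (q - a))" and "w = (p - a) * (q - a)"
  shows "off_support a v w {z. cmod (z - p) + cmod (z - q) > cmod (a - p) + cmod (a - q)}"
proof
  show "open {z. cmod (z - p) + cmod (z - q) > cmod (a - p) + cmod (a - q)}"
    by (intro open_Collect_less continuous_intros)
  fix z and \<theta> t :: real assume "z \<in> {z. cmod (z - p) + cmod (z - q) > cmod (a - p) + cmod (a - q)}" "\<theta> \<in> {0..1}"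
  with mixture_point_in_ellipse[OF assms, of \<theta> a t] show "z \<noteq> mixture_point a v w \<theta> t"
    by (auto simp: norm_minus_commute)
qed

theorem theorem1p6:
  fixes Q :: "complex poly" and a :: "nat \<Rightarrow> complex" and i j k :: nat
    and c v w :: complex
  assumes "degree Q = 3"
    and "inj_on a {1,2,3}"
    and "\<And>m. m \<in> {1,2,3} \<Longrightarrow> poly Q (a m) = 0"
    and "{i, j, k} = {1,2,3}"
    and "c \<noteq> 0"
    and "\<And>z. poly Q z = c * ((z - a i) ^ 3 + v * (z - a i)\<^sup>2 + w * (z - a i))"
  shows "cauchy_transform (M_meas (a i) v w) holomorphic_on
           {z. cmod (z - a j) + cmod (z - a k) > cmod (a i - a j) + cmod (a i - a k)}
       \<and> (\<forall>z. cmod (z - a j) + cmod (z - a k) > cmod (a i - a j) + cmod (a i - a k) \<longrightarrow>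
            poly Q z * deriv (deriv (cauchy_transform (M_meas (a i) v w))) z
            + poly (pderiv Q) z * deriv (cauchy_transform (M_meas (a i) v w)) z
            + poly (pderiv (pderiv Q)) z / 8 * cauchy_transform (M_meas (a i) v w) z
            + poly (pderiv (pderiv (pderiv Q))) z / 24 = 0)"
proof -
  have ijk: "i \<in> {1,2,3}" "j \<in> {1,2,3}" "k \<in> {1,2,3}" "i \<noteq> j" "i \<noteq> k" "j \<noteq> k"
    using assms(4) card_insert_if[of "{j, k}" i] card_insert_if[of "{k}" j] by (auto split: if_splits)
  define b d where "b = a j - a i" and "d = a k - a i"
  have "a j \<noteq> a i" "a k \<noteq> a i" "a j \<noteq> a k"
    using ijk inj_onD[OF assms(2)] by metis+
  then have "b \<noteq> 0" "d \<noteq> 0" "b \<noteq> d"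
    by (simp_all add: b_def d_def)
  moreover have "c * (b ^ 3 + v * b\<^sup>2 + w * b) = 0" "c * (d ^ 3 + v * d\<^sup>2 + w * d) = 0"
    using assms(3)[of j] assms(3)[of k] assms(6)[of "a j"] assms(6)[of "a k"] ijk
    by (simp_all add: b_def d_def)
  ultimately have v: "v = - (b + d)" and w: "w = b * d"
    using \<open>c \<noteq> 0\<close> shifted_cubic_roots[of b d v w] by simp_all
  interpret exterior: off_support "a i" v w
      "{z. cmod (z - a j) + cmod (z - a k) > cmod (a i - a j) + cmod (a i - a k)}"
    by (rule off_support_ellipse_exterior) (simp_all add: v w b_def d_def)
  show ?thesis
    using exterior.holomorphic_on_cauchy_transform
      exterior.cauchy_transform_ode[OF _ assms(6)] \<open>b \<noteq> 0\<close> \<open>d \<noteq> 0\<close> w by auto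
qed

end
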